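(* Let $n\ge1$, let $\alpha_1,\dots,\alpha_n$ be constants, and let $u_i(z),v_i(z)$, $i=1,\dots,n$, be scalar functions satisfying \[ u_i''+2s\,u_i+\tfrac12 z u_i+\alpha_iu_i=0,\qquad v_i''+2s\,v_i+\tfrac12 z v_i+\alpha_iv_i=0,\qquad s=\sum_{j=1}^n u_jv_j \] (i.e. the system $\mathbf u''+2(\mathbf u,\mathbf v)\mathbf u+\frac12z\mathbf u+A\mathbf u=0$, $\mathbf v''+2(\mathbf u,\mathbf v)\mathbf v+\frac12z\mathbf v+A^T\mathbf v=0$ with $A=\operatorname{diag}(\alpha_1,\dots,\alpha_n)$). Then $u_iv'_i-u'_iv_i=c_i$ are constants, and the products $y_i=u_iv_i$ satisfy \[ y''_i=\frac{(y'_i)^2-c^2_i}{2y_i}-y_i(4y_1+\dots+4y_n+z+2\alpha_i),\qquad i=1,\dots,n. \]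
   Context: Primes denote derivatives with respect to $z$. *)

theory Defs
  imports "HOL-Analysis.Analysis"
begin

end

theory Submission
  imports Defs "HOL-Complex_Analysis.Complex_Analysis"
begin

text \<open>Both \<open>u\<^sub>i\<close> and \<open>v\<^sub>i\<close> solve the same linear equation \<open>w'' = q w\<close> with
  \<open>q = -(2 s + z/2 + \<alpha>\<^sub>i)\<close>, so their Wronskian \<open>c\<^sub>i\<close> is constant. For \<open>y = u v\<close> one has
  \<open>y'\<^sup>2 - c\<^sup>2 = 4 u v u' v'\<close>, hence \<open>y'' = u'' v + 2 u' v' + u v'' = 2 q y + (y'\<^sup>2 - c\<^sup>2) / (2 y)\<close>.\<close>

lemma wronskian_constant_on:
  fixes f g q :: "complex \<Rightarrow> complex"
  assumes "f holomorphic_on S" "g holomorphic_on S" "open S" "connected S"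
    and f'': "\<And>z. z \<in> S \<Longrightarrow> deriv (deriv f) z = q z * f z"
    and g'': "\<And>z. z \<in> S \<Longrightarrow> deriv (deriv g) z = q z * g z"
  shows "(\<lambda>z. f z * deriv g z - deriv f z * g z) constant_on S"
proof (rule has_field_derivative_0_imp_constant_on[OF _ \<open>connected S\<close> \<open>open S\<close>])
  fix z assume z: "z \<in> S"
  have "((\<lambda>w. f w * deriv g w - deriv f w * g w) has_field_derivative
          deriv f z * deriv g z + f z * deriv (deriv g) z
          - (deriv (deriv f) z * g z + deriv f z * deriv g z)) (at z)"
    using assms(1-3) z
    by (auto intro!: derivative_eq_intros holomorphic_derivI holomorphic_deriv)
  then show "((\<lambda>w. f w * deriv g w - deriv f w * g w) has_field_derivative 0) (at z)"
    by (simp add: f'' g'' z algebra_simps)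
qed

lemma deriv2_mult:
  fixes f g :: "complex \<Rightarrow> complex"
  assumes "f holomorphic_on S" "g holomorphic_on S" "open S" "z \<in> S"
  shows "deriv (deriv (\<lambda>w. f w * g w)) z =
           deriv (deriv f) z * g z + 2 * deriv f z * deriv g z + f z * deriv (deriv g) z"
  using higher_deriv_mult[OF assms, of 2] by (simp add: numeral_2_eq_2 algebra_simps)

lemma deriv2_mult_solutions:
  fixes f g :: "complex \<Rightarrow> complex" and q :: complex
  assumes "f holomorphic_on S" "g holomorphic_on S" "open S" "z \<in> S"
    and "deriv (deriv f) z = q * f z" "deriv (deriv g) z = q * g z"
    and "f z * g z \<noteq> 0"
  shows "deriv (deriv (\<lambda>w. f w * g w)) z =
           ((deriv (\<lambda>w. f w * g w) z)\<^sup>2 - (f z * deriv g z - deriv f z * g z)\<^sup>2) / (2 * (f z * g z))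
           + 2 * q * (f z * g z)"
proof -
  have "f field_differentiable at z" "g field_differentiable at z"
    using assms(1-4) holomorphic_on_imp_differentiable_at by blast+
  then have "(deriv (\<lambda>w. f w * g w) z)\<^sup>2 - (f z * deriv g z - deriv f z * g z)\<^sup>2
               = 2 * (f z * g z) * (2 * deriv f z * deriv g z)"
    by (simp add: power2_eq_square algebra_simps)
  then show ?thesis
    using assms by (simp add: deriv2_mult[OF assms(1-4)] algebra_simps)
qed

theorem mainTheorem9:
  fixes n :: nat and S :: "complex set"
    and alpha :: "nat \<Rightarrow> complex" and u v :: "nat \<Rightarrow> complex \<Rightarrow> complex"
  assumes "n \<ge> 1"
    and "open S" and "connected S"
    and hol_u: "\<And>i. i < n \<Longrightarrow> u i holomorphic_on S"
    and hol_v: "\<And>i. i < n \<Longrightarrow> v i holomorphic_on S"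
    and eq_u: "\<And>i z. i < n \<Longrightarrow> z \<in> S \<Longrightarrow>
        deriv (deriv (u i)) z + 2 * (\<Sum>j<n. u j z * v j z) * u i z + z / 2 * u i z + alpha i * u i z = 0"
    and eq_v: "\<And>i z. i < n \<Longrightarrow> z \<in> S \<Longrightarrow>
        deriv (deriv (v i)) z + 2 * (\<Sum>j<n. u j z * v j z) * v i z + z / 2 * v i z + alpha i * v i z = 0"
  shows "\<forall>i<n. \<exists>c :: complex.
           (\<forall>z\<in>S. u i z * deriv (v i) z - deriv (u i) z * v i z = c) \<and>
           (\<forall>z\<in>S. u i z * v i z \<noteq> 0 \<longrightarrow>
              deriv (deriv (\<lambda>w. u i w * v i w)) z =
                ((deriv (\<lambda>w. u i w * v i w) z)\<^sup>2 - c\<^sup>2) / (2 * (u i z * v i z))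
                - (u i z * v i z) * (4 * (\<Sum>j<n. u j z * v j z) + z + 2 * alpha i))"
proof (intro allI impI)
  fix i assume i: "i < n"
  define q where "q z = - (2 * (\<Sum>j<n. u j z * v j z) + z / 2 + alpha i)" for z
  have u'': "deriv (deriv (u i)) z = q z * u i z" and v'': "deriv (deriv (v i)) z = q z * v i z"
    if "z \<in> S" for z
    using eq_u[OF i that] eq_v[OF i that] by (simp_all add: q_def algebra_simps eq_neg_iff_add_eq_0)
  obtain c where c: "\<And>z. z \<in> S \<Longrightarrow> u i z * deriv (v i) z - deriv (u i) z * v i z = c"
    using wronskian_constant_on[OF hol_u[OF i] hol_v[OF i] \<open>open S\<close> \<open>connected S\<close> u'' v'']
    by (auto simp: constant_on_def)
  have "deriv (deriv (\<lambda>w. u i w * v i w)) z =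
          ((deriv (\<lambda>w. u i w * v i w) z)\<^sup>2 - c\<^sup>2) / (2 * (u i z * v i z))
          - (u i z * v i z) * (4 * (\<Sum>j<n. u j z * v j z) + z + 2 * alpha i)"
    if "z \<in> S" "u i z * v i z \<noteq> 0" for z
    using deriv2_mult_solutions[OF hol_u[OF i] hol_v[OF i] \<open>open S\<close> that(1) u'' v'' that(2),
        unfolded c[OF that(1)]]
    by (simp add: that(1) q_def algebra_simps)
  with c show "\<exists>c. (\<forall>z\<in>S. u i z * deriv (v i) z - deriv (u i) z * v i z = c) \<and>
                   (\<forall>z\<in>S. u i z * v i z \<noteq> 0 \<longrightarrow>
                      deriv (deriv (\<lambda>w. u i w * v i w)) z =
                        ((deriv (\<lambda>w. u i w * v i w) z)\<^sup>2 - c\<^sup>2) / (2 * (u i z * v i z))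
                        - (u i z * v i z) * (4 * (\<Sum>j<n. u j z * v j z) + z + 2 * alpha i))"
    by blast
qed

end
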